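(* Let $\mathcal X=(\Omega,S)$ be an antisymmetric primitive schurian scheme and let $r\in S$ be a non-reflexive basic relation such that $|[r]^{r}_2\cup[r]^{r^*}_2|>2n_r/3$ and $[r]^{r^*}_2\ne\emptyset$. Then $b(\mathcal X)\le 2$.
   Context: A coherent configuration on a finite set $\Omega$ is $\mathcal X=(\Omega,S)$ with $S$ a partition of $\Omega\times\Omega$ such that $1_\Omega$ is a union of elements of $S$, $s^*=\{(\beta,\alpha):(\alpha,\beta)\in s\}\in S$ for $s\in S$, and for $r,s,t\in S$ the number $c_{rs}^t=|\{\gamma:(\alpha,\gamma)\in r,(\gamma,\beta)\in s\}|$ is independent of $(\alpha,\beta)\in t$. It is a scheme if $1_\Omega\in S$; then the valency $n_r=|\{\beta:(\alpha,\beta)\in r\}|$ is independent of $\alpha$. A scheme is primitive if the only equivalence relations on $\Omega$ that are unions of elements of $S$ are $1_\Omega$ and $\Omega^2$. It is antisymmetric if every $s\in S$ with $s=s^*$ lies in $1_\Omega$; schurian if $S$ is the set of orbits on $\Omega\times\Omega$ of some permutation group on $\Omega$. For $r,s\in S$, $r^*s$ denotes the set of elements of $S$ contained in $r^*\cdot s=\{(\alpha,\beta):\exists\gamma,(\alpha,\gamma)\in r^*,(\gamma,\beta)\in s\}$, and for an integer $m\ge0$, $[r]^s_m=\{t\in r^*s: c_{rt}^s\le m\}$. A set $B\subseteq\Omega$ is a base of $\mathcal X$ if the smallest coherent configuration on $\Omega$ whose relations (unions of basic relations) contain those of $\mathcal X$ and in which each $\{\beta\}$, $\beta\in B$, is a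 fiber (i.e. $1_{\{\beta\}}$ is basic) is complete (all basic relations singletons); $b(\mathcal X)$ is the minimal size of a base. *)

theory Defs
  imports Complex_Main "HOL-Combinatorics.Permutations"
begin

definition union_of :: "('a \<times> 'a) set set \<Rightarrow> ('a \<times> 'a) set \<Rightarrow> bool" where
  "union_of S X \<longleftrightarrow> (\<exists>T \<subseteq> S. X = \<Union>T)"

definition coherent_config :: "'a set \<Rightarrow> ('a \<times> 'a) set set \<Rightarrow> bool" where
  "coherent_config Om S \<longleftrightarrow>
     finite Om \<and>
     \<comment> \<open>S is a partition of Om \<times> Om\<close>
     (\<forall>s\<in>S. s \<noteq> {}) \<and> \<Union>S = Om \<times> Om \<and>
     (\<forall>s\<in>S. \<forall>s'\<in>S. s \<noteq> s' \<longrightarrow> s \<inter> s' = {}) \<and>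
     union_of S (Id_on Om) \<and>
     (\<forall>s\<in>S. converse s \<in> S) \<and>
     (\<forall>r\<in>S. \<forall>s\<in>S. \<forall>t\<in>S. \<forall>p\<in>t. \<forall>q\<in>t.
        card {g. (fst p, g) \<in> r \<and> (g, snd p) \<in> s} =
        card {g. (fst q, g) \<in> r \<and> (g, snd q) \<in> s})"

definition scheme :: "'a set \<Rightarrow> ('a \<times> 'a) set set \<Rightarrow> bool" where
  "scheme Om S \<longleftrightarrow> coherent_config Om S \<and> Id_on Om \<in> S"

text \<open>Valency n_r (independent of the chosen point in a scheme).\<close>
definition valency :: "'a set \<Rightarrow> ('a \<times> 'a) set \<Rightarrow> nat" where
  "valency Om r = card {b. ((SOME a. a \<in> Om), b) \<in> r}"

definition inum :: "('a \<times> 'a) set \<Rightarrow> ('a \<times> 'a) set \<Rightarrow> ('a \<times> 'a) set \<Rightarrow> nat" where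
  "inum r s t = (let p = (SOME p. p \<in> t) in card {g. (fst p, g) \<in> r \<and> (g, snd p) \<in> s})"

definition primitive :: "'a set \<Rightarrow> ('a \<times> 'a) set set \<Rightarrow> bool" where
  "primitive Om S \<longleftrightarrow>
     (\<forall>E. equiv Om E \<and> union_of S E \<longrightarrow> E = Id_on Om \<or> E = Om \<times> Om)"

definition antisymmetric :: "'a set \<Rightarrow> ('a \<times> 'a) set set \<Rightarrow> bool" where
  "antisymmetric Om S \<longleftrightarrow> (\<forall>s\<in>S. s = converse s \<longrightarrow> s \<subseteq> Id_on Om)"

definition perm_group_on :: "'a set \<Rightarrow> ('a \<Rightarrow> 'a) set \<Rightarrow> bool" where
  "perm_group_on Om G \<longleftrightarrow> (\<forall>f\<in>G. f permutes Om) \<and> id \<in> G \<and>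
     (\<forall>f\<in>G. \<forall>g\<in>G. f \<circ> g \<in> G) \<and> (\<forall>f\<in>G. inv f \<in> G)"

definition schurian :: "'a set \<Rightarrow> ('a \<times> 'a) set set \<Rightarrow> bool" where
  "schurian Om S \<longleftrightarrow> (\<exists>G. perm_group_on Om G \<and>
     S = {{(f a, f b) | f. f \<in> G} | a b. a \<in> Om \<and> b \<in> Om})"

definition rstar_s :: "('a \<times> 'a) set set \<Rightarrow> ('a \<times> 'a) set \<Rightarrow> ('a \<times> 'a) set \<Rightarrow> ('a \<times> 'a) set set" where
  "rstar_s S r s = {t \<in> S. t \<subseteq> converse r O s}"

text \<open>[r]^s_m = {t in r^* s. c_{rt}^s \<le> m}\<close>
definition bracket :: "('a \<times> 'a) set set \<Rightarrow> ('a \<times> 'a) set \<Rightarrow> ('a \<times> 'a) set \<Rightarrow> nat \<Rightarrow> ('a \<times> 'a) set set" where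
  "bracket S r s m = {t \<in> rstar_s S r s. inum r t s \<le> m}"

definition extends :: "('a \<times> 'a) set set \<Rightarrow> ('a \<times> 'a) set set \<Rightarrow> bool" where
  "extends T S \<longleftrightarrow> (\<forall>s\<in>S. union_of T s)"

definition complete_config :: "'a set \<Rightarrow> ('a \<times> 'a) set set \<Rightarrow> bool" where
  "complete_config Om T \<longleftrightarrow> (\<forall>t\<in>T. card t = 1)"

definition admissible :: "'a set \<Rightarrow> ('a \<times> 'a) set set \<Rightarrow> 'a set \<Rightarrow> ('a \<times> 'a) set set \<Rightarrow> bool" where
  "admissible Om S B T \<longleftrightarrow> coherent_config Om T \<and> extends T S \<and>
     (\<forall>b\<in>B. Id_on {b} \<in> T)"

definition is_base :: "'a set \<Rightarrow> ('a \<times> 'a) set set \<Rightarrow> 'a set \<Rightarrow> bool" where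
  "is_base Om S B \<longleftrightarrow> B \<subseteq> Om \<and>
     (\<exists>T. admissible Om S B T \<and> (\<forall>T'. admissible Om S B T' \<longrightarrow> extends T' T) \<and>
          complete_config Om T)"

definition base_number :: "'a set \<Rightarrow> ('a \<times> 'a) set set \<Rightarrow> nat" where
  "base_number Om S = (LEAST k. \<exists>B. is_base Om S B \<and> card B = k)"

end

theory Submission
  imports Defs "HOL-Combinatorics.Cycles"
begin

text \<open>
  Let \<open>T\<close> be a coherent configuration extending \<open>S\<close> in which two points \<open>x \<rightarrow>\<^sub>r y\<close> are
  fibers. A point \<open>z\<close> of \<open>x u \<inter> y v\<^sup>*\<close>, where this set has at most two points, lies in a
  fiber of size at most two, and antisymmetry rules out fibers of size two; so the closure
  \<open>forced x y\<close> of \<open>y\<close> under such steps (with \<open>u \<in> {r, r\<^sup>*}\<close>) consists of fibers of \<open>T\<close>.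
  These closures partition the neighbourhood \<open>x r\<close>, and each of them contains at least
  \<open>|[r]\<^sup>r\<^sub>2|\<close> out-neighbours and \<open>|[r]\<^sup>r\<^sup>*\<^sub>2|\<close> in-neighbours of \<open>x\<close>, so by the
  density hypothesis there are at most two of them. The stabiliser of \<open>x\<close> in the group acts
  transitively on \<open>x r\<close> and permutes the closures; two closures would be swapped by some
  element, a power of which is an involution, and antisymmetry forbids involutions. Hence
  \<open>x r\<close> consists of fibers, and \<open>[r]\<^sup>r\<^sup>*\<^sub>2 \<noteq> {}\<close> supplies a fiber among the
  out-neighbours of every fiber reached, so fibers spread along \<open>r\<close>-paths, which by
  primitivity reach every point: \<open>{x, y}\<close> is a base.
\<close>

section \<open>Counting and permutation groups\<close>

lemma card_le_if_witnesses:
  assumes "finite A" "\<And>t. t \<in> D \<Longrightarrow> \<exists>z\<in>A. R t z"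
    and "\<And>t t' z. t \<in> D \<Longrightarrow> t' \<in> D \<Longrightarrow> R t z \<Longrightarrow> R t' z \<Longrightarrow> t = t'"
  shows "card D \<le> card A"
proof -
  define w where "w t = (SOME z. z \<in> A \<and> R t z)" for t
  have w: "w t \<in> A \<and> R t (w t)" if "t \<in> D" for t
    unfolding w_def using assms(2)[OF that] by (rule someI2_bex) blast
  have "inj_on w D"
    using w assms(3) by (metis inj_onI)
  moreover have "w ` D \<subseteq> A"
    using w by blast
  ultimately show ?thesis
    using assms(1) by (rule card_inj_on_le)
qed

lemma card_three_disjoint_le:
  assumes "finite N" "A1 \<subseteq> N" "A2 \<subseteq> N" "A3 \<subseteq> N"
    and "A1 \<inter> A2 = {}" "A1 \<inter> A3 = {}" "A2 \<inter> A3 = {}"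
  shows "card A1 + card A2 + card A3 \<le> card N"
proof -
  have "finite A1" "finite A2" "finite A3"
    using finite_subset[OF assms(2,1)] finite_subset[OF assms(3,1)] finite_subset[OF assms(4,1)] .
  then have "card (A1 \<union> A2 \<union> A3) = card A1 + card A2 + card A3"
    using assms(5-7) by (simp add: card_Un_disjoint Int_Un_distrib2)
  moreover have "card (A1 \<union> A2 \<union> A3) \<le> card N"
    using assms(1-4) by (intro card_mono) auto
  ultimately show ?thesis
    by simp
qed

lemma perm_group_funpow: "perm_group_on Om G \<Longrightarrow> g \<in> G \<Longrightarrow> g ^^ k \<in> G"
  by (induction k) (auto simp: perm_group_on_def)

lemma perm_group_swap_imp_involution:
  assumes G: "perm_group_on Om G" "finite Om"
    and g: "g \<in> G" "g ` A = B" "g ` B = A" and "A \<noteq> B"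
  obtains h where "h \<in> G" "h \<circ> h = id" "h \<noteq> id"
proof -
  have "permutation g"
    using G g(1) by (auto simp: perm_group_on_def intro: permutes_imp_permutation)
  then obtain n where "g ^^ n = id" "0 < n"
    by (rule permutation_is_nilpotent)
  then have "\<exists>m. 0 < m \<and> g ^^ m = id"
    by blast
  define m where "m = (LEAST m. 0 < m \<and> g ^^ m = id)"
  have m: "0 < m" "g ^^ m = id"
    using LeastI_ex[OF \<open>\<exists>m. 0 < m \<and> g ^^ m = id\<close>] unfolding m_def by auto
  have orbit: "(g ^^ k) ` A = (if even k then A else B)" for k
  proof (induction k)
    case (Suc k)
    have "(g ^^ Suc k) ` A = g ` ((g ^^ k) ` A)"
      by (simp add: image_comp)
    with Suc.IH g(2,3) show ?case
      by simp
  qed simp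
  have "even m"
    using orbit[of m] m(2) \<open>A \<noteq> B\<close> by (auto split: if_splits)
  define h where "h = g ^^ (m div 2)"
  have "m div 2 + m div 2 = m"
    using \<open>even m\<close> by presburger
  then have "h \<circ> h = g ^^ m"
    unfolding h_def funpow_add[symmetric] by simp
  moreover have "h \<noteq> id"
    using not_less_Least[of "m div 2" "\<lambda>m. 0 < m \<and> g ^^ m = id"] m(1) \<open>even m\<close>
    unfolding h_def m_def[symmetric] by auto
  moreover have "h \<in> G"
    unfolding h_def by (rule perm_group_funpow[OF G(1) g(1)])
  ultimately show ?thesis
    using that m(2) by simp
qed

section \<open>Coherent configurations\<close>

lemma extendsE:
  assumes "extends T S" "s \<in> S" "p \<in> s"
  obtains t where "t \<in> T" "p \<in> t" "t \<subseteq> s"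
proof -
  have "union_of T s"
    using assms(1,2) unfolding extends_def by blast
  with assms(3) that show ?thesis
    unfolding union_of_def by blast
qed

lemma discrete_coherent_config:
  assumes "finite Om"
  shows "coherent_config Om {{p} | p. p \<in> Om \<times> Om}"
  unfolding coherent_config_def
proof (intro conjI)
  show "union_of {{p} |p. p \<in> Om \<times> Om} (Id_on Om)"
    unfolding union_of_def by (rule exI[of _ "{{(a, a)} | a. a \<in> Om}"]) auto
qed (use assms in auto)

lemma base_number_le: "is_base Om S B \<Longrightarrow> base_number Om S \<le> card B"
  unfolding base_number_def by (rule Least_le) blast

locale coherent_configuration =
  fixes Om :: "'a set" and S :: "('a \<times> 'a) set set"
  assumes coherent: "coherent_config Om S"
begin

lemma coherent_config_parts:
  "finite Om \<and> (\<forall>s\<in>S. s \<noteq> {}) \<and> \<Union>S = Om \<times> Om \<and>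
   (\<forall>s\<in>S. \<forall>s'\<in>S. s \<noteq> s' \<longrightarrow> s \<inter> s' = {}) \<and>
   union_of S (Id_on Om) \<and> (\<forall>s\<in>S. converse s \<in> S)"
  using coherent unfolding coherent_config_def by (elim conjE) (intro conjI)

lemma finite_Om: "finite Om"
  using coherent_config_parts by blast

lemma basic_subset: "s \<in> S \<Longrightarrow> s \<subseteq> Om \<times> Om"
  using coherent_config_parts by blast

lemma basic_cover: "p \<in> Om \<times> Om \<Longrightarrow> \<exists>s\<in>S. p \<in> s"
  using coherent_config_parts by blast

lemma basic_eqI: "s \<in> S \<Longrightarrow> s' \<in> S \<Longrightarrow> p \<in> s \<Longrightarrow> p \<in> s' \<Longrightarrow> s = s'"
  using coherent_config_parts by (metis disjoint_iff)

lemma converse_basic: "s \<in> S \<Longrightarrow> converse s \<in> S"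
  using coherent_config_parts by simp

lemma basic_nonempty: "s \<in> S \<Longrightarrow> s \<noteq> {}"
  using coherent_config_parts by simp

lemma finite_basic: "s \<in> S \<Longrightarrow> finite s"
  using finite_subset[OF basic_subset finite_cartesian_product[OF finite_Om finite_Om]] .

lemma basic_subset_Id_on:
  assumes "s \<in> S" "(z, z) \<in> s"
  shows "s \<subseteq> Id_on Om"
proof -
  have "union_of S (Id_on Om)"
    using coherent_config_parts by blast
  moreover have "(z, z) \<in> Id_on Om"
    using assms basic_subset by blast
  ultimately obtain e where "e \<in> S" "(z, z) \<in> e" "e \<subseteq> Id_on Om"
    unfolding union_of_def by blast
  with assms basic_eqI show ?thesis by blast
qed

lemma basic_reflexive_eq_Id_on:
  assumes "s \<in> S" "(z, z) \<in> s"
  shows "s = Id_on {w. (w, w) \<in> s}"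
  using basic_subset_Id_on[OF assms] by auto

lemma extends_subset:
  assumes "extends S S'" "s' \<in> S'" "t \<in> S" "p \<in> s'" "p \<in> t"
  shows "t \<subseteq> s'"
  using extendsE[OF assms(1-2,4)] basic_eqI assms(3,5) by metis

lemma card_paths_eq:
  assumes "r \<in> S" "s \<in> S" "t \<in> S" "(a, b) \<in> t" "(c, d) \<in> t"
  shows "card {g. (a, g) \<in> r \<and> (g, b) \<in> s} = card {g. (c, g) \<in> r \<and> (g, d) \<in> s}"
proof -
  have "\<forall>r\<in>S. \<forall>s\<in>S. \<forall>t\<in>S. \<forall>p\<in>t. \<forall>q\<in>t.
      card {g. (fst p, g) \<in> r \<and> (g, snd p) \<in> s} = card {g. (fst q, g) \<in> r \<and> (g, snd q) \<in> s}"
    using coherent unfolding coherent_config_def by (elim conjE)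
  from this[rule_format, OF assms] show ?thesis by simp
qed

lemma finite_paths: "r \<in> S \<Longrightarrow> finite {g. (a, g) \<in> r \<and> P g}"
  using basic_subset by (blast intro: finite_subset[OF _ finite_Om])

lemma path_transfer:
  assumes "r \<in> S" "s \<in> S" "t \<in> S" "(a, b) \<in> t" "(c, d) \<in> t" "(a, g) \<in> r" "(g, b) \<in> s"
  obtains h where "(c, h) \<in> r" "(h, d) \<in> s"
proof -
  have "card {g. (a, g) \<in> r \<and> (g, b) \<in> s} > 0"
    using assms(6,7) finite_paths[OF assms(1)] by (auto simp: card_gt_0_iff)
  then have "card {g. (c, g) \<in> r \<and> (g, d) \<in> s} > 0"
    using card_paths_eq[OF assms(1-5)] by simp
  then show ?thesis
    using that by (auto simp: card_gt_0_iff)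
qed

lemma inum_eq_card:
  assumes "u \<in> S" "w \<in> S" "s \<in> S" "(a, b) \<in> s"
  shows "inum u w s = card {g. (a, g) \<in> u \<and> (g, b) \<in> w}"
proof -
  obtain c d where "(SOME p. p \<in> s) = (c, d)" "(c, d) \<in> s"
    using someI[of "\<lambda>p. p \<in> s", OF assms(4)] by (metis surj_pair)
  then show ?thesis
    unfolding inum_def Let_def using card_paths_eq[OF assms] by simp
qed

lemma rstar_s_path:
  assumes "r \<in> S" "s \<in> S" "t \<in> rstar_s S r s" "(x, y) \<in> s"
  obtains z where "(x, z) \<in> r" "(z, y) \<in> t"
proof -
  have t: "t \<in> S" "t \<subseteq> converse r O s"
    using assms(3) by (auto simp: rstar_s_def)
  obtain a b where "(a, b) \<in> t"
    using basic_nonempty[OF t(1)] by auto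
  moreover from this t(2) obtain c where "(c, a) \<in> r" "(c, b) \<in> s"
    by blast
  ultimately show ?thesis
    using path_transfer[OF assms(1) t(1) assms(2)] assms(4) that by blast
qed

text \<open>Counting the triangles \<open>a \<rightarrow>\<^sub>r b \<rightarrow>\<^sub>s c \<rightarrow>\<^sub>t a\<close> from the edge \<open>ab\<close> and from the edge \<open>bc\<close>.\<close>

lemma card_Sigma_paths:
  assumes "r \<in> S" "u \<in> S" "w \<in> S" "(a, b) \<in> r"
  shows "card (SIGMA p:r. {g. (snd p, g) \<in> u \<and> (g, fst p) \<in> w})
    = card r * card {g. (b, g) \<in> u \<and> (g, a) \<in> w}"
proof -
  have "card {g. (snd p, g) \<in> u \<and> (g, fst p) \<in> w} = card {g. (b, g) \<in> u \<and> (g, a) \<in> w}"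
    if "p \<in> r" for p
    using that assms card_paths_eq[OF assms(2,3) converse_basic[OF assms(1)], of "snd p" "fst p" b a]
    by (cases p) auto
  then show ?thesis
    using finite_basic[OF assms(1)] finite_paths[OF assms(2)] by simp
qed

lemma card_triangles_rotate:
  assumes "r \<in> S" "s \<in> S" "t \<in> S" "(a, b) \<in> r" "(c, d) \<in> s"
  shows "card r * card {g. (b, g) \<in> s \<and> (g, a) \<in> t} = card s * card {g. (d, g) \<in> t \<and> (g, c) \<in> r}"
proof -
  let ?X = "SIGMA p:r. {g. (snd p, g) \<in> s \<and> (g, fst p) \<in> t}"
  let ?Y = "SIGMA q:s. {g. (snd q, g) \<in> t \<and> (g, fst q) \<in> r}"
  have "card ?X = card ?Y"
  proof (rule card_bij_eq)
    show "inj_on (\<lambda>((a, b), c). ((b, c), a)) ?X" "inj_on (\<lambda>((b, c), a). ((a, b), c)) ?Y"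
      by (auto simp: inj_on_def)
    show "(\<lambda>((a, b), c). ((b, c), a)) ` ?X \<subseteq> ?Y" "(\<lambda>((b, c), a). ((a, b), c)) ` ?Y \<subseteq> ?X"
      by auto
    show "finite ?X" "finite ?Y"
      using finite_basic assms(1-3) finite_paths by auto
  qed
  then show ?thesis
    using card_Sigma_paths assms by simp
qed

lemma card_paths_commute:
  assumes "r \<in> S" "t \<in> S" "(x, y) \<in> r"
  shows "card {w. (y, w) \<in> t \<and> (w, x) \<in> r} = card {w. (y, w) \<in> r \<and> (w, x) \<in> t}"
proof -
  have "card r > 0"
    using assms finite_basic by (auto simp: card_gt_0_iff)
  then show ?thesis
    using card_triangles_rotate[OF assms(1,1,2,3,3)] by simp
qed

lemma same_fiber_same_relation:
  assumes "Id_on {x} \<in> S" "f \<in> S" "(z, z) \<in> f" "(w, w) \<in> f" "t \<in> S" "(x, z) \<in> t"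
  shows "(x, w) \<in> t"
proof -
  have "(z, x) \<in> converse t"
    using assms(6) by simp
  then obtain g where "(w, g) \<in> converse t" "(g, w) \<in> t"
    by (rule path_transfer[OF converse_basic[OF assms(5)] assms(5) assms(2-4) _ assms(6)])
  moreover obtain h where "(g, h) \<in> Id_on {x}" "(h, w) \<in> t"
    by (rule path_transfer[OF assms(1) assms(5,5,6) \<open>(g, w) \<in> t\<close>, where g = x]) (use assms(6) in auto)
  ultimately show ?thesis
    by auto
qed

lemma basic_singleton_if_all_fibers:
  assumes "\<forall>z\<in>Om. Id_on {z} \<in> S" "t \<in> S"
  obtains p where "t = {p}"
proof -
  obtain a b where ab: "(a, b) \<in> t"
    using basic_nonempty[OF assms(2)] by auto
  have fibers: "Id_on {a} \<in> S" "Id_on {b} \<in> S"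
    using ab basic_subset[OF assms(2)] assms(1) by auto
  have "(c, d) = (a, b)" if cd: "(c, d) \<in> t" for c d
  proof -
    obtain h where "(c, h) \<in> Id_on {a}" "(h, d) \<in> t"
      by (rule path_transfer[OF fibers(1) assms(2,2) ab cd, where g = a]) (use ab in auto)
    moreover obtain h' where "(c, h') \<in> t" "(h', d) \<in> Id_on {b}"
      by (rule path_transfer[OF assms(2) fibers(2) assms(2) ab cd ab]) auto
    ultimately show ?thesis
      by auto
  qed
  then have "t = {(a, b)}"
    using ab by fast
  then show ?thesis
    by (rule that)
qed

lemma is_base_if_fibers:
  assumes "B \<subseteq> Om" "\<And>T. admissible Om S B T \<Longrightarrow> \<forall>z\<in>Om. Id_on {z} \<in> T"
  shows "is_base Om S B"
proof -
  define D where "D = {{p} | p. p \<in> Om \<times> Om}"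
  have "admissible Om S B D"
    unfolding admissible_def extends_def
  proof (intro conjI ballI)
    show "coherent_config Om D"
      unfolding D_def by (rule discrete_coherent_config[OF finite_Om])
    show "union_of D s" if "s \<in> S" for s
      unfolding union_of_def D_def using basic_subset[OF that]
      by (intro exI[of _ "{{p} | p. p \<in> s}"]) auto
    show "Id_on {b} \<in> D" if "b \<in> B" for b
      unfolding D_def using that assms(1) by auto
  qed
  moreover have "extends T D" if adm: "admissible Om S B T" for T
    unfolding extends_def
  proof
    fix d
    assume "d \<in> D"
    then obtain p where p: "d = {p}" "p \<in> Om \<times> Om"
      unfolding D_def by blast
    interpret T: coherent_configuration Om T
      using adm by unfold_locales (simp add: admissible_def)
    obtain t where t: "t \<in> T" "p \<in> t"
      using T.basic_cover[OF p(2)] by blast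
    obtain q where "t = {q}"
      by (rule T.basic_singleton_if_all_fibers[OF assms(2)[OF adm] t(1)])
    with t p(1) show "union_of T d"
      unfolding union_of_def by (intro exI[of _ "{t}"]) auto
  qed
  moreover have "complete_config Om D"
    unfolding complete_config_def D_def by auto
  ultimately show ?thesis
    unfolding is_base_def using assms(1) by blast
qed

end

locale coherent_scheme = coherent_configuration +
  assumes Id_on_basic: "Id_on Om \<in> S"
begin

lemma card_basic_eq:
  assumes "s \<in> S" "x \<in> Om"
  shows "card s = card Om * card {z. (x, z) \<in> s}"
proof -
  have out_degree: "card {z. (y, z) \<in> s} = card {z. (x, z) \<in> s}" if "y \<in> Om" for y
    using card_paths_eq[OF assms(1) converse_basic[OF assms(1)] Id_on_basic, of y y x x] that assms(2)
    by (simp add: Id_onI)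
  have "s = (SIGMA y:Om. {z. (y, z) \<in> s})"
    using basic_subset[OF assms(1)] by auto
  also have "card \<dots> = (\<Sum>y\<in>Om. card {z. (y, z) \<in> s})"
    by (rule card_SigmaI) (use finite_Om finite_paths[OF assms(1), where P = "\<lambda>_. True"] in auto)
  also have "\<dots> = card Om * card {z. (x, z) \<in> s}"
    using out_degree by simp
  finally show ?thesis .
qed

lemma out_degree_eq_valency:
  assumes "s \<in> S" "x \<in> Om"
  shows "card {z. (x, z) \<in> s} = valency Om s"
proof -
  have "(SOME a. a \<in> Om) \<in> Om" and "card Om > 0"
    using assms(2) finite_Om by (auto simp: some_in_eq card_gt_0_iff)
  then show ?thesis
    using card_basic_eq[OF assms] card_basic_eq[OF assms(1), of "SOME a. a \<in> Om"]
    unfolding valency_def by simp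
qed

lemma in_degree_eq_valency:
  assumes "s \<in> S" "x \<in> Om"
  shows "card {z. (z, x) \<in> s} = valency Om s"
proof -
  have "card Om * card {z. (z, x) \<in> s} = card (converse s)"
    using card_basic_eq[OF converse_basic[OF assms(1)] assms(2)] by simp
  also have "\<dots> = card Om * valency Om s"
    using card_basic_eq[OF assms] out_degree_eq_valency[OF assms] by simp
  finally show ?thesis
    using assms(2) finite_Om by (auto simp: card_gt_0_iff)
qed

end

section \<open>Fibers of extensions of antisymmetric schemes\<close>

locale antisymmetric_scheme = coherent_scheme +
  assumes antisymmetric: "antisymmetric Om S"
begin

lemma doubleton_not_fiber:
  assumes T: "coherent_config Om T" "extends T S" and F: "Id_on {z, w} \<in> T"
  shows "z = w"
proof (rule ccontr)
  assume "z \<noteq> w"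
  interpret T: coherent_configuration Om T
    by unfold_locales (fact T(1))
  have zw: "z \<in> Om" "w \<in> Om"
    using T.basic_subset[OF F] by auto
  obtain s where s: "s \<in> S" "(z, w) \<in> s"
    using basic_cover zw by blast
  obtain t where t: "t \<in> T" "(z, w) \<in> t"
    using T.basic_cover zw by blast
  have "t \<subseteq> s"
    by (rule T.extends_subset[OF T(2) s(1) t(1) s(2) t(2)])
  obtain g where "(z, g) \<in> converse t" "(g, z) \<in> t"
    by (rule T.path_transfer[OF T.converse_basic[OF t(1)] t(1) F, of w w z z z]) (use t(2) in auto)
  moreover obtain h where "(g, h) \<in> Id_on {z, w}" "(h, z) \<in> t"
    by (rule T.path_transfer[OF F t(1) t(1) t(2) \<open>(g, z) \<in> t\<close>, where g = z]) (use t(2) in auto)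
  ultimately have "(z, z) \<in> s \<or> (w, z) \<in> s"
    using \<open>t \<subseteq> s\<close> by auto
  then have "s \<subseteq> Id_on Om"
  proof
    assume "(w, z) \<in> s"
    then have "converse s = s"
      using basic_eqI[OF converse_basic[OF s(1)] s(1)] s(2) by blast
    then show ?thesis
      using antisymmetric s(1) unfolding antisymmetric_def by blast
  qed (rule basic_subset_Id_on[OF s(1)])
  with s(2) \<open>z \<noteq> w\<close> show False
    by auto
qed

lemma small_fiber_singleton:
  assumes T: "coherent_config Om T" "extends T S" and F: "Id_on F \<in> T" "z \<in> F" "card F \<le> 2"
  shows "F = {z}"
proof (rule ccontr)
  assume "F \<noteq> {z}"
  with F(2) obtain w where w: "w \<in> F" "w \<noteq> z"
    by blast
  interpret T: coherent_configuration Om T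
    by unfold_locales (fact T(1))
  have "F \<subseteq> Om"
    using T.basic_subset[OF F(1)] by auto
  then have "finite F"
    using finite_Om finite_subset by blast
  moreover have "{z, w} \<subseteq> F" "card {z, w} = 2"
    using F(2) w by auto
  ultimately have "F = {z, w}"
    using card_seteq F(3) by metis
  with F(1) have "z = w"
    using doubleton_not_fiber[OF T] by simp
  with w(2) show False
    by simp
qed

lemma fiber_of_small_intersection:
  assumes T: "coherent_config Om T" "extends T S"
    and fibers: "Id_on {x} \<in> T" "Id_on {y} \<in> T"
    and basic: "u \<in> S" "v \<in> S" and small: "card {z. (x, z) \<in> u \<and> (z, y) \<in> v} \<le> 2"
    and z: "(x, z) \<in> u" "(z, y) \<in> v"
  shows "Id_on {z} \<in> T"
proof -
  interpret T: coherent_configuration Om T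
    by unfold_locales (fact T(1))
  have "z \<in> Om"
    using basic_subset[OF basic(1)] z(1) by auto
  then obtain f where f: "f \<in> T" "(z, z) \<in> f"
    using T.basic_cover by blast
  define F where "F = {w. (w, w) \<in> f}"
  have f_eq: "f = Id_on F"
    unfolding F_def by (rule T.basic_reflexive_eq_Id_on[OF f])
  obtain t1 where t1: "t1 \<in> T" "(x, z) \<in> t1" "t1 \<subseteq> u"
    using extendsE[OF T(2) basic(1) z(1)] by blast
  obtain t2 where t2: "t2 \<in> T" "(y, z) \<in> t2" "t2 \<subseteq> converse v"
    using extendsE[OF T(2) converse_basic[OF basic(2)], of "(y, z)"] z(2) by blast
  have F_sub: "F \<subseteq> {w. (x, w) \<in> u \<and> (w, y) \<in> v}"
  proof
    fix w
    assume "w \<in> F"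
    then have "(x, w) \<in> t1" "(y, w) \<in> t2"
      using T.same_fiber_same_relation[OF fibers(1) f, of w t1] T.same_fiber_same_relation[OF fibers(2) f, of w t2] t1 t2
      by (auto simp: F_def)
    then show "w \<in> {w. (x, w) \<in> u \<and> (w, y) \<in> v}"
      using t1(3) t2(3) by auto
  qed
  then have "card F \<le> 2"
    using le_trans[OF card_mono[OF finite_paths[OF basic(1)]] small] by blast
  moreover have "z \<in> F"
    using f(2) by (simp add: F_def)
  ultimately have "F = {z}"
    using small_fiber_singleton[OF T] f(1) f_eq by blast
  then show ?thesis
    using f(1) f_eq by simp
qed

end

section \<open>Schurian schemes\<close>

locale schurian_scheme = coherent_scheme +
  fixes G :: "('a \<Rightarrow> 'a) set"
  assumes perm_group: "perm_group_on Om G"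
    and orbitals: "S = {{(f a, f b) | f. f \<in> G} | a b. a \<in> Om \<and> b \<in> Om}"
begin

lemma group_permutes: "f \<in> G \<Longrightarrow> f permutes Om"
  using perm_group by (simp add: perm_group_on_def)

lemma basic_invariant:
  assumes "s \<in> S" "(p, q) \<in> s" "f \<in> G"
  shows "(f p, f q) \<in> s"
proof -
  obtain a b where s: "s = {(f a, f b) | f. f \<in> G}"
    using assms(1) orbitals by blast
  with assms(2) obtain f' where "f' \<in> G" "p = f' a" "q = f' b"
    by auto
  moreover have "f \<circ> f' \<in> G"
    using perm_group assms(3) calculation(1) by (simp add: perm_group_on_def)
  moreover have "(f p, f q) = ((f \<circ> f') a, (f \<circ> f') b)"
    using calculation(2,3) by simp
  ultimately show ?thesis
    unfolding s by blast
qed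

lemma basic_transitive:
  assumes "s \<in> S" "(x, y) \<in> s" "(x', y') \<in> s"
  obtains g where "g \<in> G" "g x = x'" "g y = y'"
proof -
  obtain a b where s: "s = {(f a, f b) | f. f \<in> G}"
    using assms(1) orbitals by blast
  obtain f1 f2 where f: "f1 \<in> G" "x = f1 a" "y = f1 b" "f2 \<in> G" "x' = f2 a" "y' = f2 b"
    using assms(2,3) unfolding s by auto
  have "f2 \<circ> inv f1 \<in> G"
    using perm_group f(1,4) by (simp add: perm_group_on_def)
  moreover have "(f2 \<circ> inv f1) x = x'" "(f2 \<circ> inv f1) y = y'"
    using f permutes_inverses(2)[OF group_permutes[OF f(1)]] by auto
  ultimately show ?thesis
    by (rule that)
qed

lemma rtrancl_invariant:
  assumes "r \<in> S" "f \<in> G" "(a, c) \<in> r\<^sup>*"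
  shows "(f a, f c) \<in> r\<^sup>*"
  using assms(3)
proof (induction rule: rtrancl_induct)
  case (step b c)
  then show ?case
    using basic_invariant[OF assms(1) step.hyps(2) assms(2)] by (meson rtrancl.rtrancl_into_rtrancl)
qed simp

lemma union_of_invariant:
  assumes "E \<subseteq> Om \<times> Om" "\<And>f p q. f \<in> G \<Longrightarrow> (p, q) \<in> E \<Longrightarrow> (f p, f q) \<in> E"
  shows "union_of S E"
  unfolding union_of_def
proof (intro exI conjI)
  show "E = \<Union>{s \<in> S. s \<subseteq> E}"
  proof
    show "E \<subseteq> \<Union>{s \<in> S. s \<subseteq> E}"
    proof
      fix p
      assume "p \<in> E"
      then obtain s where s: "s \<in> S" "p \<in> s"
        using assms(1) basic_cover by blast
      have "s \<subseteq> E"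
      proof
        fix q
        assume "q \<in> s"
        then obtain g where "g \<in> G" "g (fst p) = fst q" "g (snd p) = snd q"
          using basic_transitive[OF s(1), of "fst p" "snd p" "fst q" "snd q"] s(2) by auto
        then show "q \<in> E"
          using assms(2)[of g "fst p" "snd p"] \<open>p \<in> E\<close> by simp
      qed
      with s show "p \<in> \<Union>{s \<in> S. s \<subseteq> E}"
        by blast
    qed
  qed blast
qed blast

lemma rtrancl_sym:
  assumes "r \<in> S" "a \<in> Om" "c \<in> Om" "(a, c) \<in> r\<^sup>*"
  shows "(c, a) \<in> r\<^sup>*"
proof -
  define reach where "reach b = {d \<in> Om. (b, d) \<in> r\<^sup>*}" for b
  have card_reach: "card (reach b) \<le> card (reach b')" if bb': "b \<in> Om" "b' \<in> Om" for b b'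
  proof -
    obtain g where g: "g \<in> G" "g b = b'"
      using basic_transitive[OF Id_on_basic Id_onI[OF bb'(1)] Id_onI[OF bb'(2)]] by metis
    have "g ` reach b \<subseteq> reach b'"
      unfolding reach_def using rtrancl_invariant[OF assms(1) g(1)] permutes_in_image[OF group_permutes[OF g(1)]] g(2)
      by auto
    moreover have "inj_on g (reach b)"
      using permutes_inj_on[OF group_permutes[OF g(1)]] .
    ultimately show ?thesis
      using finite_Om by (auto simp: reach_def intro: card_inj_on_le)
  qed
  have "reach c \<subseteq> reach a"
    unfolding reach_def using assms(4) by (auto intro: rtrancl_trans)
  then have "reach c = reach a"
    using card_seteq[of "reach a" "reach c"] card_reach[OF assms(2,3)] finite_Om
    by (auto simp: reach_def)
  then show ?thesis
    using assms(2) by (auto simp: reach_def)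
qed

lemma primitive_rtrancl_connected:
  assumes "primitive Om S" "r \<in> S" "r \<noteq> Id_on Om" "a \<in> Om" "z \<in> Om"
  shows "(a, z) \<in> r\<^sup>*"
proof -
  define E where "E = r\<^sup>* \<inter> Om \<times> Om"
  have "equiv Om E"
    using rtrancl_sym[OF assms(2)] unfolding E_def
    by (intro equivI refl_onI symI transI) (auto intro: rtrancl_trans)
  moreover have "union_of S E"
    unfolding E_def using rtrancl_invariant[OF assms(2)] permutes_in_image[OF group_permutes]
    by (intro union_of_invariant) auto
  ultimately have "E = Id_on Om \<or> E = Om \<times> Om"
    using assms(1) unfolding primitive_def by blast
  moreover have "E \<noteq> Id_on Om"
  proof
    assume E: "E = Id_on Om"
    obtain u v where uv: "(u, v) \<in> r"
      using basic_nonempty[OF assms(2)] by auto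
    then have "(u, v) \<in> Id_on Om"
      using basic_subset[OF assms(2)] E unfolding E_def by auto
    then show False
      using basic_eqI[OF assms(2) Id_on_basic uv] assms(3) by simp
  qed
  ultimately show ?thesis
    using assms(4,5) unfolding E_def by auto
qed

end

locale antisymmetric_schurian_scheme =
  antisymmetric_scheme Om S + schurian_scheme Om S G for Om S G
begin

lemma involution_eq_id:
  assumes "h \<in> G" "h \<circ> h = id"
  shows "h = id"
proof (rule ccontr)
  assume "h \<noteq> id"
  then obtain a where a: "h a \<noteq> a"
    by (auto simp: fun_eq_iff)
  then have "a \<in> Om"
    using permutes_not_in[OF group_permutes[OF assms(1)]] by blast
  then have "a \<in> Om" "h a \<in> Om"
    using permutes_in_image[OF group_permutes[OF assms(1)]] by auto
  then obtain s where s: "s \<in> S" "(a, h a) \<in> s"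
    using basic_cover by blast
  have "(h a, a) \<in> s"
    using basic_invariant[OF s assms(1)] assms(2) by (simp add: fun_eq_iff)
  then have "converse s = s"
    using basic_eqI[OF converse_basic[OF s(1)] s(1)] s(2) by blast
  then have "s \<subseteq> Id_on Om"
    using antisymmetric s(1) unfolding antisymmetric_def by blast
  with s(2) a show False
    by auto
qed

end

section \<open>Points forced by a dense basic relation\<close>

locale dense_basic_relation = antisymmetric_schurian_scheme +
  fixes r :: "('a \<times> 'a) set"
  assumes r_basic: "r \<in> S"
    and dense: "real (card (bracket S r r 2 \<union> bracket S r (converse r) 2)) > 2 * real (valency Om r) / 3"
    and bracket_converse_nonempty: "bracket S r (converse r) 2 \<noteq> {}"
begin

lemma bracket_path:
  assumes "s \<in> {r, converse r}" "t \<in> bracket S r s 2" "(x, y) \<in> s"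
  obtains z where "(x, z) \<in> r" "(z, y) \<in> t" "card {z'. (x, z') \<in> r \<and> (z', y) \<in> t} \<le> 2"
proof -
  have s: "s \<in> S"
    using assms(1) r_basic converse_basic by auto
  have t: "t \<in> rstar_s S r s" "inum r t s \<le> 2"
    using assms(2) by (auto simp: bracket_def)
  then have "t \<in> S"
    by (simp add: rstar_s_def)
  then have "card {z'. (x, z') \<in> r \<and> (z', y) \<in> t} \<le> 2"
    using inum_eq_card[OF r_basic _ s assms(3)] t(2) by simp
  moreover obtain z where "(x, z) \<in> r" "(z, y) \<in> t"
    by (rule rstar_s_path[OF r_basic s t(1) assms(3)])
  ultimately show ?thesis
    using that by blast
qed

lemma bracket_converse_reverse_path:
  assumes "t \<in> bracket S r (converse r) 2" "(x, y) \<in> r"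
  obtains w where "(w, x) \<in> r" "(y, w) \<in> t" "card {w. (y, w) \<in> t \<and> (w, x) \<in> r} \<le> 2"
proof -
  have "t \<in> S"
    using assms(1) by (simp add: bracket_def rstar_s_def)
  obtain z where "(y, z) \<in> r" "(z, x) \<in> t" and small: "card {z. (y, z) \<in> r \<and> (z, x) \<in> t} \<le> 2"
    by (rule bracket_path[OF _ assms(1), of y x]) (use assms(2) in auto)
  moreover have eq: "card {w. (y, w) \<in> t \<and> (w, x) \<in> r} = card {z. (y, z) \<in> r \<and> (z, x) \<in> t}"
    by (rule card_paths_commute[OF r_basic \<open>t \<in> S\<close> assms(2)])
  moreover have "card {z. (y, z) \<in> r \<and> (z, x) \<in> t} > 0"
    using calculation(1,2) finite_paths[OF r_basic, of y "\<lambda>z. (z, x) \<in> t"] by (auto simp: card_gt_0_iff)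
  ultimately have "{w. (y, w) \<in> t \<and> (w, x) \<in> r} \<noteq> {}"
    by (metis card.empty less_irrefl)
  with small eq that show ?thesis
    by auto
qed

inductive_set forced :: "'a \<Rightarrow> 'a \<Rightarrow> 'a set" for x y where
  forced_base: "y \<in> forced x y"
| forced_step: "\<lbrakk>v \<in> forced x y; u \<in> {r, converse r}; w \<in> S;
    card {z'. (x, z') \<in> u \<and> (z', v) \<in> w} \<le> 2; (x, z) \<in> u; (z, v) \<in> w\<rbrakk> \<Longrightarrow> z \<in> forced x y"

lemma forced_fibers:
  assumes "coherent_config Om T" "extends T S" "Id_on {x} \<in> T" "Id_on {y} \<in> T" "v \<in> forced x y"
  shows "Id_on {v} \<in> T"
  using assms(5)
proof (induction rule: forced.induct)
  case (forced_step v u w z)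
  have "u \<in> S"
    using forced_step.hyps(2) r_basic converse_basic by auto
  with forced_step show ?case
    using fiber_of_small_intersection[OF assms(1-3)] by blast
qed (fact assms(4))

lemma forced_neighbour: "v \<in> forced x y \<Longrightarrow> v = y \<or> (x, v) \<in> r \<or> (v, x) \<in> r"
  by (induction rule: forced.induct) auto

lemma finite_forced:
  assumes "y \<in> Om"
  shows "finite (forced x y)"
proof (rule finite_subset[OF _ finite_Om])
  show "forced x y \<subseteq> Om"
    using forced_neighbour basic_subset[OF r_basic] assms by blast
qed

lemma forced_trans: "v \<in> forced x y \<Longrightarrow> forced x v \<subseteq> forced x y"
proof
  fix z
  assume "v \<in> forced x y" "z \<in> forced x v"
  from this(2) show "z \<in> forced x y"
    by (induction rule: forced.induct) (use \<open>v \<in> forced x y\<close> forced.forced_step in auto)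
qed

lemma forced_image_subset:
  assumes "f \<in> G" "f x = x"
  shows "f ` forced x y \<subseteq> forced x (f y)"
proof (rule image_subsetI)
  fix z
  assume "z \<in> forced x y"
  then show "f z \<in> forced x (f y)"
  proof (induction rule: forced.induct)
    case (forced_step v u w z)
    have u: "u \<in> S"
      using forced_step.hyps(2) r_basic converse_basic by auto
    have "x \<in> Om" "v \<in> Om"
      using forced_step.hyps(5,6) basic_subset[OF u] basic_subset[OF forced_step.hyps(3)] by auto
    then obtain s where s: "s \<in> S" "(x, v) \<in> s"
      using basic_cover by blast
    have "(x, f v) \<in> s"
      using basic_invariant[OF s assms(1)] assms(2) by simp
    then have "card {z'. (x, z') \<in> u \<and> (z', f v) \<in> w} \<le> 2"
      using card_paths_eq[OF u forced_step.hyps(3) s(1) s(2)] forced_step.hyps(4) by simp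
    moreover have "(x, f z) \<in> u" "(f z, f v) \<in> w"
      using basic_invariant[OF u forced_step.hyps(5) assms(1)] assms(2)
        basic_invariant[OF forced_step.hyps(3,6) assms(1)] by simp_all
    ultimately show ?case
      using forced.forced_step[OF forced_step.IH forced_step.hyps(2,3)] by blast
  qed (rule forced_base)
qed

lemma forced_image:
  assumes "f \<in> G" "f x = x"
  shows "f ` forced x y = forced x (f y)"
proof
  show "f ` forced x y \<subseteq> forced x (f y)"
    by (rule forced_image_subset[OF assms])
  have f: "f permutes Om"
    by (rule group_permutes[OF assms(1)])
  have "inv f \<in> G"
    using perm_group assms(1) by (simp add: perm_group_on_def)
  moreover have "inv f x = x"
    using permutes_inverses(2)[OF f, of x] assms(2) by simp
  ultimately have inv_image: "inv f ` forced x (f y) \<subseteq> forced x y"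
    using forced_image_subset[of "inv f" x "f y"] permutes_inverses(2)[OF f, of y] by simp
  show "forced x (f y) \<subseteq> f ` forced x y"
  proof
    fix z
    assume "z \<in> forced x (f y)"
    then have "inv f z \<in> forced x y"
      using inv_image by blast
    then show "z \<in> f ` forced x y"
      using permutes_inverses(1)[OF f, of z] by (metis image_eqI)
  qed
qed

lemma forced_eq_if_out_neighbour:
  assumes "(x, y) \<in> r" "v \<in> forced x y" "(x, v) \<in> r"
  shows "forced x v = forced x y"
proof -
  obtain g where g: "g \<in> G" "g x = x" "g y = v"
    by (rule basic_transitive[OF r_basic assms(1,3)])
  have "forced x v = g ` forced x y"
    using forced_image[OF g(1,2)] g(3) by simp
  then have "card (forced x v) = card (forced x y)"
    using card_image[OF permutes_inj_on[OF group_permutes[OF g(1)]]] by simp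
  moreover have "y \<in> Om"
    using assms(1) basic_subset[OF r_basic] by auto
  ultimately show ?thesis
    using card_subset_eq[OF finite_forced forced_trans[OF assms(2)]] by simp
qed

lemma forced_eq_if_meet:
  assumes "(x, y) \<in> r" "(x, z) \<in> r" "v \<in> forced x y" "v \<in> forced x z"
  shows "forced x y = forced x z"
proof -
  have "\<exists>v'. (x, v') \<in> r \<and> v' \<in> forced x y \<and> v' \<in> forced x z"
  proof (cases "(v, x) \<in> r")
    case True
    obtain t where t: "t \<in> bracket S r (converse r) 2"
      using bracket_converse_nonempty by blast
    obtain v' where "(x, v') \<in> r" "(v', v) \<in> t" "card {z'. (x, z') \<in> r \<and> (z', v) \<in> t} \<le> 2"
      by (rule bracket_path[OF _ t, of x v]) (use True in auto)
    moreover have "t \<in> S"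
      using t by (simp add: bracket_def rstar_s_def)
    ultimately have "v' \<in> forced x v"
      using forced.forced_step[OF forced_base, of r] by blast
    then show ?thesis
      using forced_trans assms(3,4) \<open>(x, v') \<in> r\<close> by blast
  next
    case False
    then show ?thesis
      using forced_neighbour[OF assms(3)] assms(1,3,4) by blast
  qed
  then show ?thesis
    using forced_eq_if_out_neighbour assms(1,2) by metis
qed

lemma card_bracket_le_forced_out:
  assumes "(x, y) \<in> r"
  shows "card (bracket S r r 2) \<le> card (forced x y \<inter> {z. (x, z) \<in> r})"
proof (rule card_le_if_witnesses[where R = "\<lambda>t z. (z, y) \<in> t"])
  show "finite (forced x y \<inter> {z. (x, z) \<in> r})"
    using finite_paths[OF r_basic, of x "\<lambda>_. True"] by simp
  fix t
  assume t: "t \<in> bracket S r r 2"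
  then have "t \<in> S"
    by (simp add: bracket_def rstar_s_def)
  obtain z where "(x, z) \<in> r" "(z, y) \<in> t" "card {z'. (x, z') \<in> r \<and> (z', y) \<in> t} \<le> 2"
    by (rule bracket_path[OF _ t assms]) simp
  with \<open>t \<in> S\<close> show "\<exists>z\<in>forced x y \<inter> {z. (x, z) \<in> r}. (z, y) \<in> t"
    using forced.forced_step[OF forced_base, of r t] by blast
next
  show "t = t'" if "t \<in> bracket S r r 2" "t' \<in> bracket S r r 2" "(z, y) \<in> t" "(z, y) \<in> t'" for t t' z
    using that basic_eqI by (auto simp: bracket_def rstar_s_def)
qed

lemma card_bracket_le_forced_in:
  assumes "(x, y) \<in> r"
  shows "card (bracket S r (converse r) 2) \<le> card (forced x y \<inter> {z. (z, x) \<in> r})"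
proof (rule card_le_if_witnesses[where R = "\<lambda>t w. (y, w) \<in> t"])
  show "finite (forced x y \<inter> {z. (z, x) \<in> r})"
    using finite_paths[OF converse_basic[OF r_basic], of x "\<lambda>_. True"] by simp
  fix t
  assume t: "t \<in> bracket S r (converse r) 2"
  then have "converse t \<in> S"
    using converse_basic by (simp add: bracket_def rstar_s_def)
  obtain w where "(w, x) \<in> r" "(y, w) \<in> t" "card {w. (y, w) \<in> t \<and> (w, x) \<in> r} \<le> 2"
    by (rule bracket_converse_reverse_path[OF t assms])
  moreover have "{w. (x, w) \<in> converse r \<and> (w, y) \<in> converse t} = {w. (y, w) \<in> t \<and> (w, x) \<in> r}"
    by auto
  ultimately have "w \<in> forced x y"
    using forced.forced_step[OF forced_base, of "converse r" "converse t"] \<open>converse t \<in> S\<close> by auto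
  with \<open>(w, x) \<in> r\<close> \<open>(y, w) \<in> t\<close> show "\<exists>w\<in>forced x y \<inter> {z. (z, x) \<in> r}. (y, w) \<in> t"
    by blast
next
  show "t = t'" if "t \<in> bracket S r (converse r) 2" "t' \<in> bracket S r (converse r) 2"
    "(y, w) \<in> t" "(y, w) \<in> t'" for t t' w
    using that basic_eqI by (auto simp: bracket_def rstar_s_def)
qed

lemma no_three_disjoint_classes:
  assumes y: "(x, y1) \<in> r" "(x, y2) \<in> r" "(x, y3) \<in> r"
    and disjoint: "forced x y1 \<inter> forced x y2 = {}" "forced x y1 \<inter> forced x y3 = {}"
      "forced x y2 \<inter> forced x y3 = {}"
  shows False
proof -
  have "x \<in> Om"
    using y(1) basic_subset[OF r_basic] by auto
  have "finite {z. (x, z) \<in> r}" "finite {z. (z, x) \<in> r}"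
    using finite_paths[OF r_basic, of x "\<lambda>_. True"]
      finite_paths[OF converse_basic[OF r_basic], of x "\<lambda>_. True"] by simp_all
  then have "card (forced x y1 \<inter> {z. (x, z) \<in> r}) + card (forced x y2 \<inter> {z. (x, z) \<in> r})
        + card (forced x y3 \<inter> {z. (x, z) \<in> r}) \<le> card {z. (x, z) \<in> r}"
    and "card (forced x y1 \<inter> {z. (z, x) \<in> r}) + card (forced x y2 \<inter> {z. (z, x) \<in> r})
        + card (forced x y3 \<inter> {z. (z, x) \<in> r}) \<le> card {z. (z, x) \<in> r}"
    by (intro card_three_disjoint_le; use disjoint in blast)+
  moreover have "card (bracket S r r 2 \<union> bracket S r (converse r) 2)
      \<le> card (bracket S r r 2) + card (bracket S r (converse r) 2)"
    by (rule card_Un_le)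
  ultimately show False
    using dense out_degree_eq_valency[OF r_basic \<open>x \<in> Om\<close>] in_degree_eq_valency[OF r_basic \<open>x \<in> Om\<close>]
      card_bracket_le_forced_out[OF y(1)] card_bracket_le_forced_out[OF y(2)] card_bracket_le_forced_out[OF y(3)]
      card_bracket_le_forced_in[OF y(1)] card_bracket_le_forced_in[OF y(2)] card_bracket_le_forced_in[OF y(3)]
    by linarith
qed

lemma out_neighbours_forced:
  assumes xy: "(x, y) \<in> r"
  shows "{z. (x, z) \<in> r} \<subseteq> forced x y"
proof (rule ccontr)
  assume "\<not> ?thesis"
  then obtain z where xz: "(x, z) \<in> r" and "z \<notin> forced x y"
    by blast
  then have yz: "forced x y \<noteq> forced x z"
    using forced_base by blast
  obtain g where g: "g \<in> G" "g x = x" "g y = z"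
    by (rule basic_transitive[OF r_basic xy xz])
  have gy: "g ` forced x y = forced x z"
    using forced_image[OF g(1,2)] g(3) by simp
  have gz: "g ` forced x z = forced x (g z)"
    by (rule forced_image[OF g(1,2)])
  have xgz: "(x, g z) \<in> r"
    using basic_invariant[OF r_basic xz g(1)] g(2) by simp
  have "forced x (g z) \<noteq> forced x z"
  proof
    assume "forced x (g z) = forced x z"
    then have "g ` forced x z = g ` forced x y"
      using gy gz by simp
    with yz show False
      using inj_image_eq_iff permutes_inj[OF group_permutes[OF g(1)]] by metis
  qed
  \<comment> \<open>there are at most two classes, so \<open>g\<close> swaps them\<close>
  then have "forced x (g z) = forced x y"
    using no_three_disjoint_classes[OF xy xz xgz] forced_eq_if_meet[OF xy xz] yz
      forced_eq_if_meet[OF xy xgz] forced_eq_if_meet[OF xz xgz] by blast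
  then obtain h where "h \<in> G" "h \<circ> h = id" "h \<noteq> id"
    using perm_group_swap_imp_involution[OF perm_group finite_Om g(1) gy _ yz] gz by metis
  then show False
    using involution_eq_id by blast
qed

lemma successor_fiber:
  assumes T: "coherent_config Om T" "extends T S"
    and fibers: "Id_on {w} \<in> T" "Id_on {x} \<in> T" and wx: "(w, x) \<in> r"
  obtains z where "(x, z) \<in> r" "Id_on {z} \<in> T"
proof -
  obtain t where t: "t \<in> bracket S r (converse r) 2"
    using bracket_converse_nonempty by blast
  then have "t \<in> S"
    by (simp add: bracket_def rstar_s_def)
  obtain z where "(x, z) \<in> r" "(z, w) \<in> t" "card {z'. (x, z') \<in> r \<and> (z', w) \<in> t} \<le> 2"
    by (rule bracket_path[OF _ t, of x w]) (use wx in auto)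
  with \<open>t \<in> S\<close> have "z \<in> forced x w"
    using forced.forced_step[OF forced_base, of r t] by blast
  with \<open>(x, z) \<in> r\<close> show ?thesis
    using forced_fibers[OF T fibers(2,1)] that by blast
qed

lemma fibers_along_rtrancl:
  assumes T: "coherent_config Om T" "extends T S"
    and fibers: "Id_on {a} \<in> T" "Id_on {b} \<in> T" and ab: "(a, b) \<in> r"
    and "(a, z) \<in> r\<^sup>*"
  shows "Id_on {z} \<in> T \<and> (\<exists>z'. (z, z') \<in> r \<and> Id_on {z'} \<in> T)"
  using assms(6)
proof (induction rule: rtrancl_induct)
  case (step y z)
  then obtain y' where "(y, y') \<in> r" "Id_on {y'} \<in> T"
    by blast
  then have "Id_on {z} \<in> T"
    using forced_fibers[OF T] out_neighbours_forced step.IH step.hyps(2) by blast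
  moreover obtain z' where "(z, z') \<in> r" "Id_on {z'} \<in> T"
    by (rule successor_fiber[OF T _ calculation step.hyps(2)]) (use step.IH in blast)
  ultimately show ?case
    by blast
qed (use fibers ab in blast)

lemma all_points_fibers:
  assumes "primitive Om S" "r \<noteq> Id_on Om"
    and T: "coherent_config Om T" "extends T S"
    and fibers: "Id_on {a} \<in> T" "Id_on {b} \<in> T" and ab: "(a, b) \<in> r"
  shows "\<forall>z\<in>Om. Id_on {z} \<in> T"
proof
  fix z
  assume "z \<in> Om"
  moreover have "a \<in> Om"
    using ab basic_subset[OF r_basic] by auto
  ultimately show "Id_on {z} \<in> T"
    using fibers_along_rtrancl[OF T fibers ab] primitive_rtrancl_connected[OF assms(1) r_basic assms(2)]
    by blast
qed

end

theorem lemma3p4: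
  fixes Om :: "'a set" and S :: "('a \<times> 'a) set set" and r :: "('a \<times> 'a) set"
  assumes "scheme Om S" and "antisymmetric Om S" and "primitive Om S" and "schurian Om S"
    and "r \<in> S" and "r \<noteq> Id_on Om"
    and "real (card (bracket S r r 2 \<union> bracket S r (converse r) 2)) > 2 * real (valency Om r) / 3"
    and "bracket S r (converse r) 2 \<noteq> {}"
  shows "base_number Om S \<le> 2"
proof -
  obtain G where "perm_group_on Om G" "S = {{(f a, f b) | f. f \<in> G} | a b. a \<in> Om \<and> b \<in> Om}"
    using assms(4) unfolding schurian_def by blast
  then interpret dense_basic_relation Om S G r
    using assms by unfold_locales (auto simp: scheme_def)
  obtain a b where ab: "(a, b) \<in> r"
    using basic_nonempty[OF r_basic] by auto
  have "is_base Om S {a, b}"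
  proof (rule is_base_if_fibers)
    show "{a, b} \<subseteq> Om"
      using ab basic_subset[OF r_basic] by auto
    show "\<forall>z\<in>Om. Id_on {z} \<in> T" if "admissible Om S {a, b} T" for T
      using that all_points_fibers[OF assms(3,6)] ab unfolding admissible_def by blast
  qed
  then have "base_number Om S \<le> card {a, b}"
    by (rule base_number_le)
  also have "\<dots> \<le> 2"
    by (simp add: card_insert_le_m1)
  finally show ?thesis .
qed

end
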